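(* Let $(\Omega,\mathcal{F},\mathbb{P})$ be a probability space with a right-continuous filtration. Let $V^*$ be a strictly positive process (the num\'eraire portfolio) such that, for every $T>0$, the benchmarked zero-coupon bond price $\hat P(t,T):=P(t,T)/V^*_t$, $t\in[0,T]$, is a local martingale, where $P(t,T)>0$ denotes the continuous price of a zero-coupon bond with maturity $T$. Let $\Delta$ be a finite set of tenors $\delta>0$. For $T>0$, $\delta\in\Delta$, $R\in\mathbb{R}$, let $\Pi(t;T,\delta,R)$, $t\in[0,T]$, be the continuous value process of a single-period swap paying $\delta(L(T,T+\delta)-R)$ at $T+\delta$, and assume $\Pi(t;T,\delta,R)=\delta\bigl(L_t(T,T+\delta)-R\bigr)P(t,T+\delta)$, where the forward term rate $L_t(T,T+\delta)$ is the rate $R$ with $\Pi(t;T,\delta,R)=0$. Suppose that $(\Pi(t;T,\delta,R)/V^*_t)_{t\in[0,T]}$ is a local martingale for all $T>0$, $R\in\mathbb{R}$, $\delta\in\Delta$. Define the multiplicative forward spread \[ S_t(T,T+\delta):=\frac{1+\delta L_t(T,T+\delta)}{1+\delta F_t(T,T+\delta)},\qquad F_t(T,T+\delta):=\frac{1}{\delta}\Bigl(\frac{P(t,T)}{P(t,T+\delta)}-1\Bigr). \] Then, for all $T>0$ and $\delta\in\Delta$, the process $S_t(T,T+\delta)\hat P(t,T)$, $t\in[0,T]$, is a local martingale.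
   Context: $L(T,T+\delta)$ denotes the spot term rate for the period $[T,T+\delta]$ and $L_T(T,T+\delta)=L(T,T+\delta)$. *)

theory Defs
  imports "HOL-Probability.Probability"
begin

definition martingale_on :: "'a measure \<Rightarrow> (real \<Rightarrow> 'a measure) \<Rightarrow> real \<Rightarrow> (real \<Rightarrow> 'a \<Rightarrow> real) \<Rightarrow> bool" where
  "martingale_on M F T X \<longleftrightarrow>
     (\<forall>t\<in>{0..T}. X t \<in> borel_measurable (F t) \<and> integrable M (X t)) \<and>
     (\<forall>s t. 0 \<le> s \<longrightarrow> s \<le> t \<longrightarrow> t \<le> T \<longrightarrow>
        (\<forall>A\<in>sets (F s). (\<integral>x. indicator A x * X t x \<partial>M) = (\<integral>x. indicator A x * X s x \<partial>M)))"

definition local_martingale_on :: "'a measure \<Rightarrow> (real \<Rightarrow> 'a measure) \<Rightarrow> real \<Rightarrow> (real \<Rightarrow> 'a \<Rightarrow> real) \<Rightarrow> bool" where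
  "local_martingale_on M F T X \<longleftrightarrow>
     (\<exists>\<tau> :: nat \<Rightarrow> 'a \<Rightarrow> real.
        (\<forall>n. stopping_time F (\<tau> n)) \<and>
        (\<forall>n. \<forall>x\<in>space M. 0 \<le> \<tau> n x \<and> \<tau> n x \<le> \<tau> (Suc n) x) \<and>
        (AE x in M. filterlim (\<lambda>n. \<tau> n x) at_top sequentially) \<and>
        (\<forall>n. martingale_on M F T (\<lambda>t x. X (min t (\<tau> n x)) x)))"

definition fwd_rate :: "real \<Rightarrow> real \<Rightarrow> real \<Rightarrow> real" where
  "fwd_rate \<delta> PT PTd = (PT / PTd - 1) / \<delta>"

definition mult_spread :: "real \<Rightarrow> real \<Rightarrow> real \<Rightarrow> real \<Rightarrow> real" where
  "mult_spread \<delta> Lt PT PTd = (1 + \<delta> * Lt) / (1 + \<delta> * fwd_rate \<delta> PT PTd)"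

end

theory Submission
  imports Defs
begin

text \<open>The swap with fixed rate \<open>R = -1/\<delta>\<close> pays \<open>\<delta>(L - R) = 1 + \<delta>L\<close>, so its benchmarked value is
  \<open>(1 + \<delta>L\<^sub>t) P(t,T+\<delta>) / V\<^sub>t\<close>. Since \<open>1 + \<delta>F\<^sub>t = P(t,T) / P(t,T+\<delta>)\<close>, this is exactly
  \<open>S\<^sub>t(T,T+\<delta>) P(t,T) / V\<^sub>t\<close>, a local martingale by hypothesis.\<close>

lemma martingale_on_cong:
  assumes "martingale_on M F T X"
    and "\<And>t. space (F t) = space M"
    and eq: "\<And>t x. t \<in> {0..T} \<Longrightarrow> x \<in> space M \<Longrightarrow> X t x = Y t x"
  shows "martingale_on M F T Y"
proof -
  have X_adapted: "\<And>t. t \<in> {0..T} \<Longrightarrow> X t \<in> borel_measurable (F t) \<and> integrable M (X t)"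
    and X_mart: "\<And>s t A. 0 \<le> s \<Longrightarrow> s \<le> t \<Longrightarrow> t \<le> T \<Longrightarrow> A \<in> sets (F s) \<Longrightarrow>
        (\<integral>x. indicator A x * X t x \<partial>M) = (\<integral>x. indicator A x * X s x \<partial>M)"
    using assms(1) unfolding martingale_on_def by blast+
  show ?thesis
    unfolding martingale_on_def
  proof (intro conjI ballI allI impI)
    fix t assume t: "t \<in> {0..T}"
    have "X t \<in> borel_measurable (F t) \<longleftrightarrow> Y t \<in> borel_measurable (F t)"
      by (rule measurable_cong) (simp add: eq[OF t] assms(2))
    with X_adapted[OF t] show "Y t \<in> borel_measurable (F t)" by simp
    have "integrable M (X t) \<longleftrightarrow> integrable M (Y t)"
      by (rule Bochner_Integration.integrable_cong) (simp_all add: eq[OF t])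
    with X_adapted[OF t] show "integrable M (Y t)" by simp
  next
    fix s t A assume st: "0 \<le> s" "s \<le> t" "t \<le> T" and A: "A \<in> sets (F s)"
    have "(\<integral>x. indicator A x * Y t x \<partial>M) = (\<integral>x. indicator A x * X t x \<partial>M)"
      using st by (intro Bochner_Integration.integral_cong) (simp_all add: eq)
    also have "\<dots> = (\<integral>x. indicator A x * X s x \<partial>M)"
      using X_mart st A .
    also have "\<dots> = (\<integral>x. indicator A x * Y s x \<partial>M)"
      using st by (intro Bochner_Integration.integral_cong) (simp_all add: eq)
    finally show "(\<integral>x. indicator A x * Y t x \<partial>M) = (\<integral>x. indicator A x * Y s x \<partial>M)" .
  qed
qed

lemma local_martingale_on_cong:
  assumes "local_martingale_on M F T X"
    and "\<And>t. space (F t) = space M"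
    and eq: "\<And>t x. t \<in> {0..T} \<Longrightarrow> x \<in> space M \<Longrightarrow> X t x = Y t x"
  shows "local_martingale_on M F T Y"
proof -
  obtain \<tau> where \<tau>: "\<forall>n. stopping_time F (\<tau> n)"
      "\<forall>n. \<forall>x\<in>space M. 0 \<le> \<tau> n x \<and> \<tau> n x \<le> \<tau> (Suc n) x"
      "AE x in M. filterlim (\<lambda>n. \<tau> n x) at_top sequentially"
      and X_stopped: "\<And>n. martingale_on M F T (\<lambda>t x. X (min t (\<tau> n x)) x)"
    using assms(1) unfolding local_martingale_on_def by blast
  have "martingale_on M F T (\<lambda>t x. Y (min t (\<tau> n x)) x)" for n
  proof (rule martingale_on_cong[OF X_stopped assms(2)])
    fix t x assume "t \<in> {0..T}" "x \<in> space M"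
    then show "X (min t (\<tau> n x)) x = Y (min t (\<tau> n x)) x"
      using \<tau>(2) eq by (auto simp: min_def)
  qed
  with \<tau> show ?thesis unfolding local_martingale_on_def by blast
qed

lemma one_plus_fwd_rate:
  assumes "\<delta> \<noteq> 0"
  shows "1 + \<delta> * fwd_rate \<delta> PT PTd = PT / PTd"
  using assms by (simp add: fwd_rate_def)

lemma mult_spread_mult_bond:
  assumes "\<delta> \<noteq> 0" and "PT \<noteq> 0"
  shows "mult_spread \<delta> Lt PT PTd * PT = (1 + \<delta> * Lt) * PTd"
  using assms by (simp add: mult_spread_def one_plus_fwd_rate)

theorem corollary2p13:
  fixes M :: "'a measure"
    and F :: "real \<Rightarrow> 'a measure"
    and V :: "real \<Rightarrow> 'a \<Rightarrow> real"
    and P :: "real \<Rightarrow> real \<Rightarrow> 'a \<Rightarrow> real"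
    and \<Delta> :: "real set"
    and Pi :: "real \<Rightarrow> real \<Rightarrow> real \<Rightarrow> real \<Rightarrow> 'a \<Rightarrow> real"
    and L :: "real \<Rightarrow> real \<Rightarrow> real \<Rightarrow> 'a \<Rightarrow> real"
  assumes prob: "prob_space M"
    and F_sub: "\<And>t. sets (F t) \<subseteq> sets M"
    and F_space: "\<And>t. space (F t) = space M"
    and F_mono: "\<And>s t. s \<le> t \<Longrightarrow> sets (F s) \<subseteq> sets (F t)"
    and F_rcont: "\<And>t. sets (F t) = (\<Inter>s\<in>{t<..}. sets (F s))"
    and V_pos: "\<And>t x. 0 \<le> t \<Longrightarrow> x \<in> space M \<Longrightarrow> V t x > 0"
    and V_rcont: "\<And>t x. 0 \<le> t \<Longrightarrow> x \<in> space M \<Longrightarrow> continuous (at_right t) (\<lambda>s. V s x)"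
    and V_llim: "\<And>t x. 0 < t \<Longrightarrow> x \<in> space M \<Longrightarrow> \<exists>l. ((\<lambda>s. V s x) \<longlongrightarrow> l) (at_left t)"
    and P_pos: "\<And>t T x. 0 \<le> t \<Longrightarrow> t \<le> T \<Longrightarrow> x \<in> space M \<Longrightarrow> P t T x > 0"
    and P_cont: "\<And>T x. 0 < T \<Longrightarrow> x \<in> space M \<Longrightarrow> continuous_on {0..T} (\<lambda>t. P t T x)"
    and P_lmart: "\<And>T. 0 < T \<Longrightarrow> local_martingale_on M F T (\<lambda>t x. P t T x / V t x)"
    and Delta_fin: "finite \<Delta>"
    and Delta_pos: "\<And>\<delta>. \<delta> \<in> \<Delta> \<Longrightarrow> \<delta> > 0"
    and Pi_cont: "\<And>T \<delta> R x. 0 < T \<Longrightarrow> \<delta> \<in> \<Delta> \<Longrightarrow> x \<in> space M \<Longrightarrow>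
                    continuous_on {0..T} (\<lambda>t. Pi t T \<delta> R x)"
    and Pi_eq: "\<And>t T \<delta> R x. 0 < T \<Longrightarrow> \<delta> \<in> \<Delta> \<Longrightarrow> 0 \<le> t \<Longrightarrow> t \<le> T \<Longrightarrow> x \<in> space M \<Longrightarrow>
                    Pi t T \<delta> R x = \<delta> * (L t T \<delta> x - R) * P t (T + \<delta>) x"
    and Pi_lmart: "\<And>T \<delta> R. 0 < T \<Longrightarrow> \<delta> \<in> \<Delta> \<Longrightarrow>
                    local_martingale_on M F T (\<lambda>t x. Pi t T \<delta> R x / V t x)"
  shows "\<forall>T>0. \<forall>\<delta>\<in>\<Delta>. local_martingale_on M F T
           (\<lambda>t x. mult_spread \<delta> (L t T \<delta> x) (P t T x) (P t (T + \<delta>) x) * (P t T x / V t x))"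
proof (intro allI impI ballI)
  fix T \<delta> :: real assume T: "T > 0" and \<delta>: "\<delta> \<in> \<Delta>"
  have "\<delta> \<noteq> 0" using Delta_pos[OF \<delta>] by simp
  show "local_martingale_on M F T
           (\<lambda>t x. mult_spread \<delta> (L t T \<delta> x) (P t T x) (P t (T + \<delta>) x) * (P t T x / V t x))"
  proof (rule local_martingale_on_cong[OF Pi_lmart[OF T \<delta>, of "-1/\<delta>"] F_space])
    fix t x assume t: "t \<in> {0..T}" and x: "x \<in> space M"
    have "Pi t T \<delta> (-1/\<delta>) x = \<delta> * (L t T \<delta> x + 1/\<delta>) * P t (T + \<delta>) x"
      using Pi_eq[OF T \<delta>, where R = "-1/\<delta>"] t x by simp
    also have "\<dots> = (1 + \<delta> * L t T \<delta> x) * P t (T + \<delta>) x"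
      using \<open>\<delta> \<noteq> 0\<close> by (simp add: field_simps)
    also have "\<dots> = mult_spread \<delta> (L t T \<delta> x) (P t T x) (P t (T + \<delta>) x) * P t T x"
      using \<open>\<delta> \<noteq> 0\<close> P_pos[of t T x] t x by (simp add: mult_spread_mult_bond)
    finally show "Pi t T \<delta> (-1/\<delta>) x / V t x =
        mult_spread \<delta> (L t T \<delta> x) (P t T x) (P t (T + \<delta>) x) * (P t T x / V t x)"
      by simp
  qed
qed

end
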